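(* Consider the battery cost-minimization problem described in the context with fixed $t_0, T, K, Z, T_c, D$, and let $J(C_{\mathrm{ref}})$ denote its optimal (minimum) cost as a function of the battery capacity $C_{\mathrm{ref}}$. If $0\le C^1_{\mathrm{ref}} < C^2_{\mathrm{ref}}$, then $J(C^1_{\mathrm{ref}}) \ge J(C^2_{\mathrm{ref}})$.
   Context: Data: a time interval $[t_0,t_0+T]$ with $T>0$; a PV power profile $P_{\mathrm{pv}}(t)\ge 0$ and a (piecewise continuous) load profile $P_{\mathrm{load}}(t)$ on this interval; a time-of-use price $C_g(t)\ge 0$; constants $0<\eta_{\mathrm{pv}}\le 1$, $0<\eta_B\le 1$, $K>0$, $Z>0$, $T_c>0$, $D>0$, and a battery capacity $C_{\mathrm{ref}}\ge 0$. A control is a function $u$ on $[t_0,t_0+T]$; it determines states $E_B(t)$ and $\Delta C(t)$ via $E_B(t_0)=0$, $\Delta C(t_0)=0$, $\frac{dE_B}{dt}=u(t)/\eta_B$ if $u(t)<0$ and $\frac{dE_B}{dt}=\eta_B u(t)$ otherwise; $\frac{d\Delta C}{dt}=-Z u(t)/\eta_B$ if $u(t)<0$ and $\frac{d\Delta C}{dt}=0$ otherwise. A control is feasible (for capacity $C_{\mathrm{ref}}$) if for all $t\in[t_0,t_0+T]$: $E_B(t)\ge 0$; $E_B(t)+\Delta C(t)\le C_{\mathrm{ref}}$; $\eta_B u(t) T_c+\Delta C(t)\le C_{\mathrm{ref}}$ whenever $u(t)>0$; $-\frac{u(t)}{\eta_B}T_c+\Delta C(t)\le C_{\mathrm{ref}}$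 whenever $u(t)<0$; and $P_{\mathrm{load}}(t)-\eta_{\mathrm{pv}}P_{\mathrm{pv}}(t)+u(t)\le D$. The cost of a feasible control is $\int_{t_0}^{t_0+T} C_g(\tau)\big(P_{\mathrm{load}}(\tau)-\eta_{\mathrm{pv}}P_{\mathrm{pv}}(\tau)+u(\tau)\big)\,d\tau + K\,\Delta C(t_0+T)$, and $J(C_{\mathrm{ref}})$ is the minimum of this cost over all feasible controls. *)

theory Defs
  imports "HOL-Analysis.Analysis"
begin

definition piecewise_cont_on :: "real \<Rightarrow> real \<Rightarrow> (real \<Rightarrow> real) \<Rightarrow> bool" where
  "piecewise_cont_on a b f \<longleftrightarrow>
     bounded (f ` {a..b}) \<and> (\<exists>S. finite S \<and> (\<forall>t\<in>{a..b} - S. isCont f t))"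

text \<open>Battery energy state: E_B(t0) = 0, dE_B/dt = u/eta_B if u<0, eta_B*u otherwise
  (integral form of the ODE).\<close>
definition EB :: "real \<Rightarrow> real \<Rightarrow> (real \<Rightarrow> real) \<Rightarrow> real \<Rightarrow> real" where
  "EB t0 etaB u t = integral {t0..t} (\<lambda>s. if u s < 0 then u s / etaB else etaB * u s)"

text \<open>Capacity degradation state: Delta C(t0) = 0, dDeltaC/dt = -Z u/eta_B if u<0, 0 otherwise.\<close>
definition DC :: "real \<Rightarrow> real \<Rightarrow> real \<Rightarrow> (real \<Rightarrow> real) \<Rightarrow> real \<Rightarrow> real" where
  "DC t0 etaB Z u t = integral {t0..t} (\<lambda>s. if u s < 0 then - Z * u s / etaB else 0)"

definition feasible ::
  "real \<Rightarrow> real \<Rightarrow> (real \<Rightarrow> real) \<Rightarrow> (real \<Rightarrow> real) \<Rightarrow> (real \<Rightarrow> real) \<Rightarrow>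
   real \<Rightarrow> real \<Rightarrow> real \<Rightarrow> real \<Rightarrow> real \<Rightarrow> real \<Rightarrow> (real \<Rightarrow> real) \<Rightarrow> bool" where
  "feasible t0 T Ppv Pload Cg etapv etaB Z Tc D Cref u \<longleftrightarrow>
     u absolutely_integrable_on {t0..t0+T} \<and>
     (\<lambda>\<tau>. Cg \<tau> * (Pload \<tau> - etapv * Ppv \<tau> + u \<tau>)) integrable_on {t0..t0+T} \<and>
     (\<forall>t\<in>{t0..t0+T}.
        EB t0 etaB u t \<ge> 0 \<and>
        EB t0 etaB u t + DC t0 etaB Z u t \<le> Cref \<and>
        (u t > 0 \<longrightarrow> etaB * u t * Tc + DC t0 etaB Z u t \<le> Cref) \<and>
        (u t < 0 \<longrightarrow> - (u t / etaB) * Tc + DC t0 etaB Z u t \<le> Cref) \<and>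
        Pload t - etapv * Ppv t + u t \<le> D)"

definition cost ::
  "real \<Rightarrow> real \<Rightarrow> (real \<Rightarrow> real) \<Rightarrow> (real \<Rightarrow> real) \<Rightarrow> (real \<Rightarrow> real) \<Rightarrow>
   real \<Rightarrow> real \<Rightarrow> real \<Rightarrow> real \<Rightarrow> (real \<Rightarrow> real) \<Rightarrow> real" where
  "cost t0 T Ppv Pload Cg etapv etaB K Z u =
     integral {t0..t0+T} (\<lambda>\<tau>. Cg \<tau> * (Pload \<tau> - etapv * Ppv \<tau> + u \<tau>))
     + K * DC t0 etaB Z u (t0 + T)"

definition is_min_cost ::
  "real \<Rightarrow> real \<Rightarrow> (real \<Rightarrow> real) \<Rightarrow> (real \<Rightarrow> real) \<Rightarrow> (real \<Rightarrow> real) \<Rightarrow>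
   real \<Rightarrow> real \<Rightarrow> real \<Rightarrow> real \<Rightarrow> real \<Rightarrow> real \<Rightarrow> real \<Rightarrow> real \<Rightarrow> bool" where
  "is_min_cost t0 T Ppv Pload Cg etapv etaB K Z Tc D Cref J \<longleftrightarrow>
     (\<exists>u. feasible t0 T Ppv Pload Cg etapv etaB Z Tc D Cref u \<and>
          cost t0 T Ppv Pload Cg etapv etaB K Z u = J) \<and>
     (\<forall>u. feasible t0 T Ppv Pload Cg etapv etaB Z Tc D Cref u \<longrightarrow>
          J \<le> cost t0 T Ppv Pload Cg etapv etaB K Z u)"

end

theory Submission
  imports Defs
begin

lemma feasible_mono_capacity:
  assumes "feasible t0 T Ppv Pload Cg etapv etaB Z Tc D C1 u" and "C1 \<le> C2"
  shows "feasible t0 T Ppv Pload Cg etapv etaB Z Tc D C2 u"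
  using assms unfolding feasible_def by force

lemma min_cost_antimono_capacity:
  assumes "C1 \<le> C2"
    and "is_min_cost t0 T Ppv Pload Cg etapv etaB K Z Tc D C1 J1"
    and "is_min_cost t0 T Ppv Pload Cg etapv etaB K Z Tc D C2 J2"
  shows "J2 \<le> J1"
proof -
  obtain u where u1: "feasible t0 T Ppv Pload Cg etapv etaB Z Tc D C1 u"
    and cost_u: "cost t0 T Ppv Pload Cg etapv etaB K Z u = J1"
    using assms(2) unfolding is_min_cost_def by blast
  have "feasible t0 T Ppv Pload Cg etapv etaB Z Tc D C2 u"
    using feasible_mono_capacity[OF u1 assms(1)] .
  then show ?thesis
    using assms(3) cost_u unfolding is_min_cost_def by blast
qed

theorem proposition2:
  fixes t0 T K Z Tc D etapv etaB C1 C2 J1 J2 :: real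
    and Ppv Pload Cg :: "real \<Rightarrow> real"
  assumes "T > 0"
    and "\<forall>t\<in>{t0..t0+T}. Ppv t \<ge> 0"
    and "piecewise_cont_on t0 (t0+T) Pload"
    and "\<forall>t\<in>{t0..t0+T}. Cg t \<ge> 0"
    and "0 < etapv" "etapv \<le> 1" "0 < etaB" "etaB \<le> 1"
    and "K > 0" "Z > 0" "Tc > 0" "D > 0"
    and "0 \<le> C1" "C1 < C2"
    and "is_min_cost t0 T Ppv Pload Cg etapv etaB K Z Tc D C1 J1"
    and "is_min_cost t0 T Ppv Pload Cg etapv etaB K Z Tc D C2 J2"
  shows "J1 \<ge> J2"
  using min_cost_antimono_capacity[OF less_imp_le[OF \<open>C1 < C2\<close>]] assms(15,16) by blast

end
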